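(* Let $n\ge 3$ and let $\preceq$ be an admissible partial order on $\Lambda$. Let $\mathbf{T}(\preceq)$ be the set of all tilings $T$ such that for every 4-element subset $F\subseteq[n]$, the set $T\cap\mathrm{stick}(F)$ is an initial segment of $\mathrm{stick}(F)$ if $\preceq$ orders the stick of $F$ lexicographically, and a final segment of $\mathrm{stick}(F)$ if $\preceq$ orders it anti-lexicographically. Then $\mathbf{T}(\preceq)$ is a Condorcet super-domain which is maximal by inclusion: for every tiling $T\notin\mathbf{T}(\preceq)$, the set $\mathbf{T}(\preceq)\cup\{T\}$ is not a Condorcet super-domain.
   Context: Fix an integer $n\ge 3$ and write $[n]=\{1,\dots,n\}$. Let $\Lambda$ be the set of 3-element subsets of $[n]$; a triple $\{i,j,k\}$ with $i<j<k$ is written $ijk$. For a 4-element subset $F=\{i<j<k<l\}$ of $[n]$, the stick of $F$, $\mathrm{stick}(F)$, is the sequence $(ijk,\ ijl,\ ikl,\ jkl)$ (the lexicographic order on these four triples); the reverse sequence is the anti-lexicographic order. A tiling (the inversion set of a rhombus tiling of the zonogon $Z(n;2)$) is a subset $T\subseteq\Lambda$ such that for every 4-element $F\subseteq[n]$, $T\cap\mathrm{stick}(F)$ is an initial segment or a final segment of $\mathrm{stick}(F)$ (empty set and whole stick allowed). Let $\mathbf T$ be the set of tilings. For a finite set $V$ of odd cardinality and tilings $(T_v)_{v\in V}$, $sm((T_v)_{v\in V})$ is the set of triples lying in $T_v$ for more than $|V|/2$ indices $v$. A subset $\mathbf D\subseteq\mathbf T$ is a Condorcet super-domain if for every finite $V$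 of odd cardinality and every family $(T_v)_{v\in V}$ with all $T_v\in\mathbf D$, $sm((T_v)_{v\in V})$ is a tiling. A partial order $\preceq$ on $\Lambda$ is admissible if for every 4-element $F\subseteq[n]$ its restriction to the four triples of $\mathrm{stick}(F)$ is the lexicographic linear order or the anti-lexicographic linear order. *)

theory Defs
  imports Main
begin

definition Lambda :: "nat \<Rightarrow> nat set set" where
  "Lambda n = {S. S \<subseteq> {1..n} \<and> card S = 3}"

text \<open>For F = {i<j<k<l}, stick F = [ijk, ijl, ikl, jkl]
  (obtained by removing l, k, j, i respectively).\<close>
definition stick :: "nat set \<Rightarrow> nat set list" where
  "stick F = map (\<lambda>x. F - {x}) (rev (sorted_list_of_set F))"

definition is_initial_seg :: "'a set \<Rightarrow> 'a list \<Rightarrow> bool" where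
  "is_initial_seg A xs \<longleftrightarrow> (\<exists>m\<le>length xs. A \<inter> set xs = set (take m xs))"

definition is_final_seg :: "'a set \<Rightarrow> 'a list \<Rightarrow> bool" where
  "is_final_seg A xs \<longleftrightarrow> (\<exists>m\<le>length xs. A \<inter> set xs = set (drop m xs))"

definition quads :: "nat \<Rightarrow> nat set set" where
  "quads n = {F. F \<subseteq> {1..n} \<and> card F = 4}"

definition tilings :: "nat \<Rightarrow> nat set set set" where
  "tilings n = {T. T \<subseteq> Lambda n \<and>
     (\<forall>F\<in>quads n. is_initial_seg T (stick F) \<or> is_final_seg T (stick F))}"

definition sm :: "'v set \<Rightarrow> ('v \<Rightarrow> nat set set) \<Rightarrow> nat set set" where
  "sm V Ts = {t. 2 * card {v\<in>V. t \<in> Ts v} > card V}"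

text \<open>Condorcet super-domain (index sets V taken as finite sets of naturals,
  which is no loss of generality).\<close>
definition condorcet_super :: "nat \<Rightarrow> nat set set set \<Rightarrow> bool" where
  "condorcet_super n D \<longleftrightarrow> D \<subseteq> tilings n \<and>
     (\<forall>(V::nat set) Ts. finite V \<and> odd (card V) \<and> (\<forall>v\<in>V. Ts v \<in> D)
        \<longrightarrow> sm V Ts \<in> tilings n)"

definition lex_on :: "(nat set \<times> nat set) set \<Rightarrow> nat set \<Rightarrow> bool" where
  "lex_on R F \<longleftrightarrow> (\<forall>a<4. \<forall>b<4. (stick F ! a, stick F ! b) \<in> R \<longleftrightarrow> a \<le> b)"

definition antilex_on :: "(nat set \<times> nat set) set \<Rightarrow> nat set \<Rightarrow> bool" where
  "antilex_on R F \<longleftrightarrow> (\<forall>a<4. \<forall>b<4. (stick F ! a, stick F ! b) \<in> R \<longleftrightarrow> b \<le> a)"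

definition admissible :: "nat \<Rightarrow> (nat set \<times> nat set) set \<Rightarrow> bool" where
  "admissible n R \<longleftrightarrow> partial_order_on (Lambda n) R \<and>
     (\<forall>F\<in>quads n. lex_on R F \<or> antilex_on R F)"

definition Tprec :: "nat \<Rightarrow> (nat set \<times> nat set) set \<Rightarrow> nat set set set" where
  "Tprec n R = {T\<in>tilings n. \<forall>F\<in>quads n.
      (lex_on R F \<longrightarrow> is_initial_seg T (stick F)) \<and>
      (antilex_on R F \<longrightarrow> is_final_seg T (stick F))}"

end

theory Submission
  imports Defs
begin

text \<open>
  List a stick in \<open>\<preceq>\<close>-increasing order. Every member of \<open>T(\<preceq>)\<close> meets it in an initial
  segment: voter by voter, membership of a later triple implies membership of the previous
  one; such implications survive simple majority, so \<open>T(\<preceq>)\<close> is a Condorcet super-domain.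
  A tiling \<open>T\<close> outside \<open>T(\<preceq>)\<close> meets some stick \<open>w \<prec> x \<prec> y \<prec> z\<close> in a final but not an
  initial segment. The empty set and the principal ideals \<open>{u. u \<preceq> t}\<close> lie in \<open>T(\<preceq>)\<close>, and the
  majority of \<open>T\<close> with either \<open>{}\<close> and the ideal of \<open>y\<close>, or the ideals of \<open>z\<close> and \<open>w\<close>, meets
  the stick in a set that is neither an initial nor a final segment, hence is not a tiling.
\<close>

lemma nth_in_set_take_iff:
  assumes "distinct xs" "j < length xs"
  shows "xs ! j \<in> set (take m xs) \<longleftrightarrow> j < m"
  using assms by (auto simp: in_set_conv_nth nth_eq_iff_index_eq)

lemma is_initial_seg_iff:
  assumes "distinct xs"
  shows "is_initial_seg A xs \<longleftrightarrow> (\<forall>i. Suc i < length xs \<longrightarrow> xs ! Suc i \<in> A \<longrightarrow> xs ! i \<in> A)"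
proof
  assume "is_initial_seg A xs"
  then obtain m where m: "A \<inter> set xs = set (take m xs)"
    by (auto simp: is_initial_seg_def)
  show "\<forall>i. Suc i < length xs \<longrightarrow> xs ! Suc i \<in> A \<longrightarrow> xs ! i \<in> A"
  proof (intro allI impI)
    fix i assume i: "Suc i < length xs" "xs ! Suc i \<in> A"
    then have "Suc i < m" using m nth_in_set_take_iff[OF assms] by (metis IntI nth_mem)
    then have "xs ! i \<in> set (take m xs)" using i nth_in_set_take_iff[OF assms] by simp
    then show "xs ! i \<in> A" using m by blast
  qed
next
  assume step: "\<forall>i. Suc i < length xs \<longrightarrow> xs ! Suc i \<in> A \<longrightarrow> xs ! i \<in> A"
  define m where "m = length (takeWhile (\<lambda>u. u \<in> A) xs)"
  have "A \<inter> set xs \<subseteq> set (take m xs)"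
  proof
    fix u assume "u \<in> A \<inter> set xs"
    then obtain j where j: "j < length xs" "xs ! j \<in> A" "u = xs ! j"
      by (auto simp: in_set_conv_nth)
    have "j < m"
    proof (rule ccontr)
      assume "\<not> j < m"
      then have "m \<le> j" by simp
      then have "xs ! m \<in> A"
        by (induction rule: inc_induct) (use step j in auto)
      moreover have "m < length xs" using \<open>m \<le> j\<close> j(1) by simp
      ultimately show False using nth_length_takeWhile unfolding m_def by fastforce
    qed
    then show "u \<in> set (take m xs)" using j by (auto simp: in_set_conv_nth)
  qed
  moreover have "set (take m xs) \<subseteq> A \<inter> set xs"
    using takeWhile_eq_take[of "\<lambda>u. u \<in> A" xs] set_takeWhileD unfolding m_def by fastforce
  ultimately show "is_initial_seg A xs"
    unfolding is_initial_seg_def by (intro exI[of _ m]) (auto simp: m_def length_takeWhile_le)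
qed

lemma is_final_seg_iff_initial_rev: "is_final_seg A xs \<longleftrightarrow> is_initial_seg A (rev xs)"
  unfolding is_final_seg_def is_initial_seg_def
  by (metis diff_diff_cancel diff_le_self length_rev rev_drop set_rev)

lemma is_initial_seg_4:
  assumes "distinct [w, x, y, z]"
  shows "is_initial_seg A [w, x, y, z] \<longleftrightarrow> (x \<in> A \<longrightarrow> w \<in> A) \<and> (y \<in> A \<longrightarrow> x \<in> A) \<and> (z \<in> A \<longrightarrow> y \<in> A)"
  unfolding is_initial_seg_iff[OF assms] by (simp add: All_less_Suc2 numeral_eq_Suc)

lemma is_final_seg_4:
  assumes "distinct [w, x, y, z]"
  shows "is_final_seg A [w, x, y, z] \<longleftrightarrow> (w \<in> A \<longrightarrow> x \<in> A) \<and> (x \<in> A \<longrightarrow> y \<in> A) \<and> (y \<in> A \<longrightarrow> z \<in> A)"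
  using assms is_initial_seg_4[of z y x w A] by (auto simp: is_final_seg_iff_initial_rev)

definition ascending_in :: "'a rel \<Rightarrow> 'a list \<Rightarrow> bool" where
  "ascending_in R xs \<longleftrightarrow> (\<forall>i<length xs. \<forall>j<length xs. (xs ! i, xs ! j) \<in> R \<longleftrightarrow> i \<le> j)"

lemma ascending_in_distinct: "ascending_in R xs \<Longrightarrow> distinct xs"
  unfolding ascending_in_def distinct_conv_nth by (metis order_antisym order_refl)

lemma initial_seg_under:
  assumes "trans R" "ascending_in R xs"
  shows "is_initial_seg (under R t) xs"
proof -
  have "(xs ! i, xs ! Suc i) \<in> R" if "Suc i < length xs" for i
    using assms(2) that unfolding ascending_in_def by simp
  then show ?thesis
    unfolding is_initial_seg_iff[OF ascending_in_distinct[OF assms(2)]] under_def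
    using transD[OF assms(1)] by blast
qed

lemma sm_subset:
  assumes "\<And>v. v \<in> V \<Longrightarrow> Ts v \<subseteq> S"
  shows "sm V Ts \<subseteq> S"
proof
  fix t assume "t \<in> sm V Ts"
  then have "card {v\<in>V. t \<in> Ts v} \<noteq> 0" by (simp add: sm_def)
  then have "{v\<in>V. t \<in> Ts v} \<noteq> {}" by (metis card.empty)
  then show "t \<in> S" using assms by blast
qed

lemma sm_mono:
  assumes "finite V" "\<And>v. v \<in> V \<Longrightarrow> s \<in> Ts v \<Longrightarrow> t \<in> Ts v" "s \<in> sm V Ts"
  shows "t \<in> sm V Ts"
proof -
  have "card {v\<in>V. s \<in> Ts v} \<le> card {v\<in>V. t \<in> Ts v}"
    using assms by (intro card_mono) auto
  then show ?thesis using assms(3) by (simp add: sm_def)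
qed

lemma sm_initial_seg:
  assumes "finite V" "distinct xs" "\<And>v. v \<in> V \<Longrightarrow> is_initial_seg (Ts v) xs"
  shows "is_initial_seg (sm V Ts) xs"
  using assms sm_mono[OF assms(1)] unfolding is_initial_seg_iff[OF assms(2)] by blast

lemma sm_final_seg:
  assumes "finite V" "distinct xs" "\<And>v. v \<in> V \<Longrightarrow> is_final_seg (Ts v) xs"
  shows "is_final_seg (sm V Ts) xs"
  using assms sm_initial_seg[of V "rev xs"] by (simp add: is_final_seg_iff_initial_rev)

definition median :: "'a set \<Rightarrow> 'a set \<Rightarrow> 'a set \<Rightarrow> 'a set" where
  "median A B C = (A \<inter> B) \<union> (A \<inter> C) \<union> (B \<inter> C)"

lemma sm_three_voters: "sm {0, 1, 2 :: nat} ((!) [A, B, C]) = median A B C"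
proof (intro set_eqI)
  fix t
  have voters: "{v \<in> {0, 1, 2}. t \<in> [A, B, C] ! v} =
      (if t \<in> A then {0} else {}) \<union> (if t \<in> B then {1} else {}) \<union> (if t \<in> C then {2} else {})"
    by (auto simp: nth_Cons')
  show "t \<in> sm {0, 1, 2} ((!) [A, B, C]) \<longleftrightarrow> t \<in> median A B C"
    unfolding sm_def mem_Collect_eq voters
    by (cases "t \<in> A"; cases "t \<in> B"; cases "t \<in> C") (simp_all add: median_def)
qed

lemma quads_finite_card: "F \<in> quads n \<Longrightarrow> finite F \<and> card F = 4"
  unfolding quads_def using card_ge_0_finite by force

lemma length_stick: "length (stick F) = card F"
  by (simp add: stick_def)

lemma distinct_stick: "finite F \<Longrightarrow> distinct (stick F)"
  unfolding stick_def by (auto simp: distinct_map inj_on_def)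

lemma lex_on_ascending_in: "card F = 4 \<Longrightarrow> lex_on R F \<Longrightarrow> ascending_in R (stick F)"
  by (simp add: lex_on_def ascending_in_def length_stick)

lemma antilex_on_ascending_in_rev:
  assumes "card F = 4" "antilex_on R F"
  shows "ascending_in R (rev (stick F))"
  unfolding ascending_in_def
proof (intro allI impI)
  fix i j assume "i < length (rev (stick F))" "j < length (rev (stick F))"
  then have "i < 4" "j < 4" using assms(1) by (simp_all add: length_stick)
  then have "(stick F ! (3 - i), stick F ! (3 - j)) \<in> R \<longleftrightarrow> 3 - j \<le> 3 - i"
    using assms(2) unfolding antilex_on_def by simp
  with \<open>i < 4\<close> \<open>j < 4\<close> show "(rev (stick F) ! i, rev (stick F) ! j) \<in> R \<longleftrightarrow> i \<le> j"
    using assms(1) by (auto simp: rev_nth length_stick)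
qed

lemma empty_in_Tprec: "{} \<in> Tprec n R"
  unfolding Tprec_def tilings_def is_initial_seg_def is_final_seg_def
  by (auto intro: exI[of _ 0] exI[of _ "length (stick _)"])

lemma under_in_Tprec:
  assumes adm: "admissible n R"
  shows "under R t \<in> Tprec n R"
proof -
  have R: "R \<subseteq> Lambda n \<times> Lambda n" "trans R"
    using adm by (auto simp: admissible_def partial_order_on_def preorder_on_def)
  have segs: "(lex_on R F \<longrightarrow> is_initial_seg (under R t) (stick F)) \<and>
      (antilex_on R F \<longrightarrow> is_final_seg (under R t) (stick F))" if "F \<in> quads n" for F
    using that quads_finite_card initial_seg_under[OF R(2)] lex_on_ascending_in
      antilex_on_ascending_in_rev is_final_seg_iff_initial_rev by metis
  moreover have "under R t \<subseteq> Lambda n" using R(1) by (auto simp: under_def)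
  ultimately show ?thesis
    using adm unfolding Tprec_def tilings_def admissible_def by blast
qed

lemma condorcet_super_Tprec:
  assumes adm: "admissible n R"
  shows "condorcet_super n (Tprec n R)"
  unfolding condorcet_super_def
proof (intro conjI allI impI)
  show "Tprec n R \<subseteq> tilings n" by (auto simp: Tprec_def)
  fix V :: "nat set" and Ts
  assume "finite V \<and> odd (card V) \<and> (\<forall>v\<in>V. Ts v \<in> Tprec n R)"
  then have V: "finite V" and Ts: "\<And>v. v \<in> V \<Longrightarrow> Ts v \<in> Tprec n R" by auto
  have "sm V Ts \<subseteq> Lambda n"
    using Ts by (intro sm_subset) (auto simp: Tprec_def tilings_def)
  moreover have "is_initial_seg (sm V Ts) (stick F) \<or> is_final_seg (sm V Ts) (stick F)"
    if F: "F \<in> quads n" for F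
  proof -
    have dist: "distinct (stick F)" using F quads_finite_card distinct_stick by blast
    have "lex_on R F \<or> antilex_on R F" using adm F by (auto simp: admissible_def)
    then show ?thesis
      using sm_initial_seg[OF V dist] sm_final_seg[OF V dist] Ts F by (auto simp: Tprec_def)
  qed
  ultimately show "sm V Ts \<in> tilings n" by (simp add: tilings_def)
qed

lemma median_with_ideals_not_segment:
  assumes asc: "ascending_in R [w, x, y, z]"
    and final: "is_final_seg T [w, x, y, z]" and not_initial: "\<not> is_initial_seg T [w, x, y, z]"
  obtains A B where "A \<in> insert {} (range (under R))" "B \<in> insert {} (range (under R))"
    "\<not> is_initial_seg (median T A B) [w, x, y, z]" "\<not> is_final_seg (median T A B) [w, x, y, z]"
proof -
  have dist: "distinct [w, x, y, z]" using ascending_in_distinct[OF asc] .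
  have R: "w \<in> under R w" "x \<notin> under R w" "w \<in> under R y" "x \<in> under R y" "y \<in> under R y"
    "z \<notin> under R y" "w \<in> under R z" "x \<in> under R z" "y \<in> under R z" "z \<in> under R z"
    using asc unfolding ascending_in_def under_def by (simp_all add: All_less_Suc2 numeral_eq_Suc)
  note segs = is_initial_seg_4[OF dist] is_final_seg_4[OF dist]
  show thesis
  proof (cases "x \<in> T")
    case True
    \<comment> \<open>the majority meets the stick in \<open>{x, y}\<close>\<close>
    then have "w \<notin> T" "y \<in> T" "z \<in> T" using final not_initial unfolding segs by blast+
    then show thesis
      using that[of "under R y" "{}"] True R unfolding segs median_def by simp
  next
    case False
    \<comment> \<open>the majority meets the stick in \<open>{w, z}\<close> or \<open>{w, y, z}\<close>\<close>
    then have "w \<notin> T" "z \<in> T" using final not_initial unfolding segs by blast+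
    then show thesis
      using that[of "under R z" "under R w"] False R unfolding segs median_def by auto
  qed
qed

lemma Tprec_maximal:
  assumes adm: "admissible n R" and T: "T \<in> tilings n" "T \<notin> Tprec n R"
  shows "\<not> condorcet_super n (insert T (Tprec n R))"
proof
  assume cs: "condorcet_super n (insert T (Tprec n R))"
  have median_tiling: "median T A B \<in> tilings n" if "A \<in> Tprec n R" "B \<in> Tprec n R" for A B
  proof -
    have "\<forall>v\<in>{0, 1, 2}. [T, A, B] ! v \<in> insert T (Tprec n R)"
      using that by (auto simp: nth_Cons')
    then have "sm {0, 1, 2 :: nat} ((!) [T, A, B]) \<in> tilings n"
      using cs unfolding condorcet_super_def by simp
    then show ?thesis unfolding sm_three_voters .
  qed
  obtain F where F: "F \<in> quads n" and bad: "lex_on R F \<and> \<not> is_initial_seg T (stick F) \<or>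
      antilex_on R F \<and> \<not> is_final_seg T (stick F)"
    using T unfolding Tprec_def by blast
  have F4: "finite F" "card F = 4" using quads_finite_card[OF F] by auto
  obtain xs where xs: "xs = stick F \<or> xs = rev (stick F)" "ascending_in R xs" "\<not> is_initial_seg T xs"
    using bad lex_on_ascending_in[OF F4(2)] antilex_on_ascending_in_rev[OF F4(2)]
    unfolding is_final_seg_iff_initial_rev by metis
  have segment: "is_initial_seg S xs \<or> is_final_seg S xs" if "S \<in> tilings n" for S
    using that F xs(1) unfolding tilings_def by (auto simp: is_final_seg_iff_initial_rev)
  have "length xs = 4" using xs(1) F4(2) by (auto simp: length_stick)
  then obtain w x y z where xs_eq: "xs = [w, x, y, z]"
    by (auto simp: numeral_eq_Suc length_Suc_conv)
  have "is_final_seg T xs" using segment[OF T(1)] xs(3) by blast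
  then obtain A B where AB: "A \<in> insert {} (range (under R))" "B \<in> insert {} (range (under R))"
      and not_segment: "\<not> is_initial_seg (median T A B) xs" "\<not> is_final_seg (median T A B) xs"
    using median_with_ideals_not_segment xs(2,3) unfolding xs_eq by metis
  have "A \<in> Tprec n R" "B \<in> Tprec n R"
    using AB empty_in_Tprec under_in_Tprec[OF adm] by auto
  then show False using segment[OF median_tiling] not_segment by blast
qed

theorem theorem2:
  fixes n :: nat and R :: "(nat set \<times> nat set) set"
  assumes "n \<ge> 3" and "admissible n R"
  shows "condorcet_super n (Tprec n R) \<and>
    (\<forall>T\<in>tilings n. T \<notin> Tprec n R \<longrightarrow> \<not> condorcet_super n (insert T (Tprec n R)))"
  using condorcet_super_Tprec[OF assms(2)] Tprec_maximal[OF assms(2)] by blast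

end
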